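(* Let $\mathcal R$ be the compositum of all real quadratic integer rings $\mathcal O_{\mathbb{Q}(\sqrt{d})}$ ($d>1$ squarefree). Let $A=(a_{uv})$ be an $n\times n$ symmetric $\mathcal R$-matrix, and suppose that for some index $v$ one has $d_v:=\sum_{u=1}^n a_{uv}^2>4$. Then $A\notin\mathfrak S'_n$.
   Context: For a symmetric $\mathcal R$-matrix $A$, let $L_A$ denote the smallest normal extension of $\mathbb{Q}$ containing all entries of $A$. $\mathfrak S'_n$ denotes the set of $n\times n$ symmetric $\mathcal R$-matrices $A$ such that for every $\sigma\in\operatorname{Gal}(L_A/\mathbb{Q})$, all eigenvalues of $\sigma(A)$ (with $\sigma$ applied entrywise) lie in the interval $[-2,2]$. *)

theory Defs
  imports "HOL-Analysis.Analysis" "HOL-Computational_Algebra.Polynomial"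
    "HOL-Computational_Algebra.Squarefree"
begin

definition quad_int_ring :: "nat \<Rightarrow> real set" where
  "quad_int_ring d = {x. (\<exists>a\<in>\<rat>. \<exists>b\<in>\<rat>. x = a + b * sqrt (real d)) \<and> algebraic_int x}"

definition R_ring :: "real set" where
  "R_ring = \<Inter> {S. 0 \<in> S \<and> 1 \<in> S \<and> (\<forall>x\<in>S. \<forall>y\<in>S. x + y \<in> S \<and> x - y \<in> S \<and> x * y \<in> S)
      \<and> (\<forall>d::nat. d > 1 \<and> squarefree d \<longrightarrow> quad_int_ring d \<subseteq> S)}"

definition is_subfield :: "complex set \<Rightarrow> bool" where
  "is_subfield K \<longleftrightarrow> 0 \<in> K \<and> 1 \<in> K \<and>
     (\<forall>x\<in>K. \<forall>y\<in>K. x + y \<in> K \<and> x - y \<in> K \<and> x * y \<in> K) \<and> (\<forall>x\<in>K. inverse x \<in> K)"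

text \<open>z is a Q-conjugate of x: z is a root of every rational polynomial vanishing at x
  (for algebraic x: z is a root of the minimal polynomial of x).\<close>
definition Q_conjugate :: "complex \<Rightarrow> complex \<Rightarrow> bool" where
  "Q_conjugate x z \<longleftrightarrow>
     (\<forall>p :: rat poly. poly (map_poly of_rat p) x = 0 \<longrightarrow> poly (map_poly of_rat p) z = 0)"

definition normal_over_Q :: "complex set \<Rightarrow> bool" where
  "normal_over_Q K \<longleftrightarrow> is_subfield K \<and>
     (\<forall>x\<in>K. algebraic x \<and> (\<forall>z. Q_conjugate x z \<longrightarrow> z \<in> K))"

definition L_field :: "real^'n^'n \<Rightarrow> complex set" where
  "L_field A = \<Inter> {K. normal_over_Q K \<and> (\<forall>i j. complex_of_real (A $ i $ j) \<in> K)}"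

text \<open>Gal(L/Q): field automorphisms of L (they automatically fix Q).\<close>
definition Gal :: "complex set \<Rightarrow> (complex \<Rightarrow> complex) set" where
  "Gal L = {\<sigma>. bij_betw \<sigma> L L \<and> \<sigma> 1 = 1 \<and>
     (\<forall>x\<in>L. \<forall>y\<in>L. \<sigma> (x + y) = \<sigma> x + \<sigma> y \<and> \<sigma> (x * y) = \<sigma> x * \<sigma> y)}"

definition apply_aut :: "(complex \<Rightarrow> complex) \<Rightarrow> real^'n^'n \<Rightarrow> complex^'n^'n" where
  "apply_aut \<sigma> A = (\<chi> i j. \<sigma> (complex_of_real (A $ i $ j)))"

definition is_eigenvalue :: "complex^'n^'n \<Rightarrow> complex \<Rightarrow> bool" where
  "is_eigenvalue M c \<longleftrightarrow> (\<exists>x. x \<noteq> 0 \<and> M *v x = c *s x)"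

definition is_R_matrix :: "real^'n^'n \<Rightarrow> bool" where
  "is_R_matrix A \<longleftrightarrow> (\<forall>i j. A $ i $ j \<in> R_ring)"

definition S'_set :: "(real^'n^'n) set" where
  "S'_set = {A. is_R_matrix A \<and> transpose A = A \<and>
     (\<forall>\<sigma>\<in>Gal (L_field A). \<forall>c. is_eigenvalue (apply_aut \<sigma> A) c \<longrightarrow>
        c \<in> complex_of_real ` {-2..2})}"

end

theory Submission
  imports Defs
begin

text \<open>Only the identity automorphism is needed: the spectral radius of a real symmetric matrix
  is the maximum of \<open>\<parallel>A x\<parallel>\<close> over unit vectors \<open>x\<close>, and on the basis vector \<open>e\<^sub>v\<close> this is
  \<open>\<parallel>A e\<^sub>v\<parallel> = \<surd>d\<^sub>v > 2\<close>. The maximum is attained on the compact unit sphere, and the first-order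
  condition at a maximiser \<open>x\<^sub>0\<close> gives \<open>A\<^sup>2 x\<^sub>0 = \<parallel>A x\<^sub>0\<parallel>\<^sup>2 x\<^sub>0\<close>, from which an eigenvector of \<open>A\<close>
  with eigenvalue \<open>\<plusminus>\<parallel>A x\<^sub>0\<parallel>\<close> is read off.\<close>

lemma symmetric_matrix_inner_commute:
  fixes A :: "real^'n^'n"
  assumes "transpose A = A"
  shows "(A *v x) \<bullet> y = x \<bullet> (A *v y)"
proof -
  have "x \<bullet> (A *v y) = (x v* A) \<bullet> y" by (simp add: dot_lmul_matrix)
  also have "x v* A = transpose A *v x" by simp
  finally show ?thesis using assms by simp
qed

lemma quadratic_nonpos_imp_linear_coeff_zero:
  fixes b c :: real
  assumes "\<And>t. 2 * t * b + t\<^sup>2 * c \<le> 0"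
  shows "b = 0"
proof (rule ccontr)
  assume "b \<noteq> 0"
  define s where "s = 1 + \<bar>c\<bar>"
  have "s > 0" unfolding s_def by simp
  have "s\<^sup>2 * (2 * (b / s) * b + (b / s)\<^sup>2 * c) = b\<^sup>2 * (2 * s + c)"
    using \<open>s > 0\<close> by (simp add: power2_eq_square field_simps)
  moreover have "b\<^sup>2 * (2 * s + c) > 0"
    using \<open>b \<noteq> 0\<close> unfolding s_def by (intro mult_pos_pos) auto
  ultimately have "2 * (b / s) * b + (b / s)\<^sup>2 * c > 0"
    using \<open>s > 0\<close> by (metis mult_le_0_iff not_le zero_le_power2)
  with assms[of "b / s"] show False by simp
qed

lemma matrix_vector_norm_le_max_on_sphere:
  fixes A :: "real^'n^'m"
  assumes "\<And>y. norm y = 1 \<Longrightarrow> norm (A *v y) \<le> m"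
  shows "norm (A *v z) \<le> m * norm z"
proof (cases "z = 0")
  case False
  then have "norm ((1 / norm z) *\<^sub>R z) = 1" by simp
  from assms[OF this] have "norm (A *v z) / norm z \<le> m"
    by (simp add: matrix_vector_mult_scaleR)
  with False show ?thesis by (simp add: field_simps)
qed simp

text \<open>First-order condition for maximising \<open>\<parallel>A x\<parallel>\<^sup>2\<close> on the unit sphere: along the line
  \<open>x\<^sub>0 + t y\<close> the quadratic \<open>M \<parallel>x\<^sub>0 + t y\<parallel>\<^sup>2 - \<parallel>A (x\<^sub>0 + t y)\<parallel>\<^sup>2\<close> is nonnegative and vanishes at \<open>t = 0\<close>.\<close>
lemma symmetric_matrix_maximiser_on_sphere:
  fixes A :: "real^'n^'n"
  assumes sym: "transpose A = A" and "norm x0 = 1"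
    and max: "\<And>y. norm y = 1 \<Longrightarrow> norm (A *v y) \<le> norm (A *v x0)"
  shows "A *v (A *v x0) = (norm (A *v x0))\<^sup>2 *\<^sub>R x0"
proof -
  define M where "M = (norm (A *v x0))\<^sup>2"
  have x0x0: "x0 \<bullet> x0 = 1" using \<open>norm x0 = 1\<close> by (simp add: dot_square_norm)
  have bound: "(A *v z) \<bullet> (A *v z) \<le> M * (z \<bullet> z)" for z
    using matrix_vector_norm_le_max_on_sphere[OF max, of z]
    by (simp add: M_def dot_square_norm power_mult_distrib[symmetric] power_mono)
  have gradient: "(A *v x0) \<bullet> (A *v y) = M * (x0 \<bullet> y)" for y
  proof -
    define b where "b = (A *v x0) \<bullet> (A *v y) - M * (x0 \<bullet> y)"
    define c where "c = (A *v y) \<bullet> (A *v y) - M * (y \<bullet> y)"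
    have "2 * t * b + t\<^sup>2 * c \<le> 0" for t
      using bound[of "x0 + t *\<^sub>R y"] x0x0
      unfolding b_def c_def M_def dot_square_norm[symmetric]
      by (simp add: inner_commute power2_eq_square algebra_simps)
    then have "b = 0" by (rule quadratic_nonpos_imp_linear_coeff_zero)
    then show ?thesis unfolding b_def by simp
  qed
  have "(A *v (A *v x0) - M *\<^sub>R x0) \<bullet> y = 0" for y
    using gradient[of y] symmetric_matrix_inner_commute[OF sym, of "A *v x0" y]
    by (simp add: inner_diff_left)
  from this[of "A *v (A *v x0) - M *\<^sub>R x0"] show ?thesis unfolding M_def by simp
qed

text \<open>Since \<open>(A - m)(A + m) x = 0\<close>, either \<open>(A + m) x\<close> is an eigenvector for \<open>m\<close>, or it vanishes
  and \<open>x\<close> is an eigenvector for \<open>-m\<close>.\<close>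
lemma eigenvector_of_square_eigenvector:
  fixes A :: "real^'n^'n"
  assumes "x \<noteq> 0" and "A *v (A *v x) = (m * m) *\<^sub>R x"
  shows "\<exists>w l. w \<noteq> 0 \<and> A *v w = l *\<^sub>R w \<and> \<bar>l\<bar> = \<bar>m\<bar>"
proof (cases "A *v x + m *\<^sub>R x = 0")
  case True
  then have "A *v x = (- m) *\<^sub>R x" by (simp add: eq_neg_iff_add_eq_0)
  with \<open>x \<noteq> 0\<close> show ?thesis by (intro exI[of _ x] exI[of _ "- m"]) auto
next
  case False
  have "A *v (A *v x + m *\<^sub>R x) = m *\<^sub>R (A *v x + m *\<^sub>R x)"
    using assms(2) by (simp add: algebra_simps)
  with False show ?thesis by blast
qed

lemma symmetric_matrix_eigenvalue_ge_norm:
  fixes A :: "real^'n^'n"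
  assumes "transpose A = A"
  shows "\<exists>w l. w \<noteq> 0 \<and> A *v w = l *\<^sub>R w \<and> norm (A *v x) \<le> \<bar>l\<bar> * norm x"
proof -
  have "continuous_on (sphere 0 1) (\<lambda>y::real^'n. norm (A *v y))"
    by (intro continuous_intros matrix_vector_mult_linear_continuous_on)
  from continuous_attains_sup[OF compact_sphere _ this] obtain x0 where "x0 \<in> sphere 0 1"
    and "\<forall>y\<in>sphere 0 1. norm (A *v y) \<le> norm (A *v x0)"
    by fastforce
  then have "norm x0 = 1" and max: "\<And>y. norm y = 1 \<Longrightarrow> norm (A *v y) \<le> norm (A *v x0)"
    by simp_all
  have "A *v (A *v x0) = (norm (A *v x0) * norm (A *v x0)) *\<^sub>R x0"
    using symmetric_matrix_maximiser_on_sphere[OF assms \<open>norm x0 = 1\<close>] max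
    by (simp add: power2_eq_square)
  moreover have "x0 \<noteq> 0" using \<open>norm x0 = 1\<close> by auto
  ultimately obtain w l where "w \<noteq> 0" "A *v w = l *\<^sub>R w" "\<bar>l\<bar> = norm (A *v x0)"
    using eigenvector_of_square_eigenvector by fastforce
  moreover have "norm (A *v x) \<le> norm (A *v x0) * norm x"
    using max by (intro matrix_vector_norm_le_max_on_sphere) simp
  ultimately show ?thesis by metis
qed

lemma norm_matrix_column_squared:
  fixes A :: "real^'n^'m"
  shows "(norm (A *v axis v 1))\<^sup>2 = (\<Sum>u\<in>UNIV. (A $ u $ v)\<^sup>2)"
proof -
  have "A *v axis v 1 = (\<chi> u. A $ u $ v)"
    by (simp add: vec_eq_iff matrix_vector_mult_def axis_def if_distrib cong: if_cong)
  then show ?thesis unfolding power2_norm_eq_inner by (simp add: inner_vec_def power2_eq_square)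
qed

lemma is_eigenvalue_complexified:
  fixes A :: "real^'n^'n"
  assumes "w \<noteq> 0" and "A *v w = l *\<^sub>R w"
  shows "is_eigenvalue (\<chi> i j. complex_of_real (A $ i $ j)) (complex_of_real l)"
proof -
  define x :: "complex^'n" where "x = (\<chi> i. complex_of_real (w $ i))"
  have "x \<noteq> 0" using assms(1) unfolding x_def by (auto simp: vec_eq_iff)
  moreover have "(A *v w) $ i = l * w $ i" for i using assms(2) by simp
  then have "(\<chi> i j. complex_of_real (A $ i $ j)) *v x = complex_of_real l *s x"
    unfolding x_def by (simp add: vec_eq_iff matrix_vector_mult_def flip: of_real_mult of_real_sum)
  ultimately show ?thesis unfolding is_eigenvalue_def by blast
qed

lemma id_in_Gal: "id \<in> Gal L"
  unfolding Gal_def by simp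

theorem lemma2:
  fixes A :: "real^'n^'n" and v :: 'n
  assumes "is_R_matrix A"
    and "transpose A = A"
    and "(\<Sum>u\<in>UNIV. (A $ u $ v)^2) > 4"
  shows "A \<notin> S'_set"
proof
  assume "A \<in> S'_set"
  obtain w l where "w \<noteq> 0" "A *v w = l *\<^sub>R w" and l: "norm (A *v axis v 1) \<le> \<bar>l\<bar>"
    using symmetric_matrix_eigenvalue_ge_norm[OF assms(2), of "axis v 1"]
    by auto
  have "2\<^sup>2 < (norm (A *v axis v 1))\<^sup>2"
    using assms(3) by (simp add: norm_matrix_column_squared)
  with l have "\<bar>l\<bar> > 2" by (smt (verit) power_mono norm_ge_zero)
  have "is_eigenvalue (apply_aut id A) (complex_of_real l)"
    using is_eigenvalue_complexified[OF \<open>w \<noteq> 0\<close> \<open>A *v w = l *\<^sub>R w\<close>]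
    by (simp add: apply_aut_def)
  with \<open>A \<in> S'_set\<close> id_in_Gal have "complex_of_real l \<in> complex_of_real ` {-2..2}"
    unfolding S'_set_def by blast
  with \<open>\<bar>l\<bar> > 2\<close> show False by auto
qed

end
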